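(* Let $\mathcal A,\mathcal B>0$, $\alpha,\beta\in(0,1)$, $h,\tau>0$, and for a real number $\theta$ let $s=\sin^2(\theta h/2)$, $$\widetilde{\mathcal Q}=\Big[1-\tfrac{4}{35}s^3\Big]+4g_0^{(\alpha,\beta)}s\Big[1+\tfrac13 s+\tfrac{8}{45}s^2\Big],\qquad \widetilde{\mathcal P}=\Big[1-\tfrac{4}{35}s^3\Big]-4g_1^{(\alpha,\beta)}s\Big[1+\tfrac13 s+\tfrac{8}{45}s^2\Big].$$ Then $|\widetilde{\mathcal P}/\widetilde{\mathcal Q}|\le1$ for every real $\theta$.
   Context: $\varpi_\ell^{(\sigma)}=(-1)^\ell\binom{\sigma}{\ell}$, $g_0^{(\sigma)}=\frac{1+\sigma}{2}\varpi_0^{(\sigma)}$, $g_\ell^{(\sigma)}=\frac{1+\sigma}{2}\varpi_\ell^{(\sigma)}+\frac{1-\sigma}{2}\varpi_{\ell-1}^{(\sigma)}$ ($\ell\ge1$); $\mu_\alpha=\tau^\alpha\mathcal A/h^2$, $\mu_\beta=\tau^\beta\mathcal B/h^2$, $g_\ell^{(\alpha,\beta)}=\mu_\alpha g_\ell^{(1-\alpha)}+\mu_\beta g_\ell^{(1-\beta)}$. *)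

theory Defs
  imports Complex_Main
begin

definition varpi :: "real \<Rightarrow> nat \<Rightarrow> real" where
  "varpi \<sigma> l = (-1) ^ l * (\<sigma> gchoose l)"

definition gcoef :: "real \<Rightarrow> nat \<Rightarrow> real" where
  "gcoef \<sigma> l = (if l = 0 then (1 + \<sigma>) / 2 * varpi \<sigma> 0
     else (1 + \<sigma>) / 2 * varpi \<sigma> l + (1 - \<sigma>) / 2 * varpi \<sigma> (l - 1))"

definition gab :: "real \<Rightarrow> real \<Rightarrow> real \<Rightarrow> real \<Rightarrow> real \<Rightarrow> real \<Rightarrow> nat \<Rightarrow> real" where
  "gab A B \<alpha> \<beta> h \<tau> l =
     (\<tau> powr \<alpha> * A / h\<^sup>2) * gcoef (1 - \<alpha>) l + (\<tau> powr \<beta> * B / h\<^sup>2) * gcoef (1 - \<beta>) l"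

end

theory Submission
  imports Defs
begin

text \<open>Writing \<open>c = 1 - 4/35 s\<^sup>3\<close> and \<open>d = 4 s (1 + s/3 + 8/45 s\<^sup>2)\<close>, the ratio is
  \<open>(c - g\<^sub>1 d) / (c + g\<^sub>0 d)\<close> with \<open>c > 0\<close> and \<open>d \<ge> 0\<close> because \<open>0 \<le> s \<le> 1\<close>.
  It therefore suffices that \<open>|g\<^sub>1| \<le> g\<^sub>0\<close>, which holds for each of the two fractional
  orders separately (\<open>g\<^sub>0 = (1+\<sigma>)/2\<close>, \<open>g\<^sub>1 = (1-2\<sigma>-\<sigma>\<^sup>2)/2\<close> with \<open>0 \<le> \<sigma> \<le> 1\<close>) and hence
  for their positive combination.\<close>

lemma gcoef_0: "gcoef \<sigma> 0 = (1 + \<sigma>) / 2"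
  by (simp add: gcoef_def varpi_def)

lemma gcoef_1: "gcoef \<sigma> 1 = (1 - 2 * \<sigma> - \<sigma>\<^sup>2) / 2"
  by (simp add: gcoef_def varpi_def power2_eq_square field_simps)

lemma abs_gcoef_1_le_gcoef_0:
  assumes "0 \<le> \<sigma>" "\<sigma> \<le> 1"
  shows "\<bar>gcoef \<sigma> 1\<bar> \<le> gcoef \<sigma> 0"
proof -
  have "gcoef \<sigma> 0 + gcoef \<sigma> 1 = (1 - \<sigma>) * (2 + \<sigma>) / 2"
    and "gcoef \<sigma> 0 - gcoef \<sigma> 1 = \<sigma> * (3 + \<sigma>) / 2"
    unfolding gcoef_0 gcoef_1 by (simp_all add: power2_eq_square field_simps)
  moreover have "(1 - \<sigma>) * (2 + \<sigma>) \<ge> 0" "\<sigma> * (3 + \<sigma>) \<ge> 0"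
    using assms by simp_all
  ultimately show ?thesis
    by (simp only: abs_le_iff) linarith
qed

lemma abs_gab_1_le_gab_0:
  assumes "A \<ge> 0" "B \<ge> 0" "0 \<le> \<alpha>" "\<alpha> \<le> 1" "0 \<le> \<beta>" "\<beta> \<le> 1"
  shows "\<bar>gab A B \<alpha> \<beta> h \<tau> 1\<bar> \<le> gab A B \<alpha> \<beta> h \<tau> 0"
proof -
  define a where "a = \<tau> powr \<alpha> * A / h\<^sup>2"
  define b where "b = \<tau> powr \<beta> * B / h\<^sup>2"
  have a: "a \<ge> 0" and b: "b \<ge> 0"
    using assms by (simp_all add: a_def b_def)
  have "\<bar>gab A B \<alpha> \<beta> h \<tau> 1\<bar> \<le> \<bar>a * gcoef (1 - \<alpha>) 1\<bar> + \<bar>b * gcoef (1 - \<beta>) 1\<bar>"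
    unfolding gab_def a_def b_def by (rule abs_triangle_ineq)
  also have "\<dots> = a * \<bar>gcoef (1 - \<alpha>) 1\<bar> + b * \<bar>gcoef (1 - \<beta>) 1\<bar>"
    using a b by (simp add: abs_mult)
  also have "\<dots> \<le> a * gcoef (1 - \<alpha>) 0 + b * gcoef (1 - \<beta>) 0"
    using a b assms abs_gcoef_1_le_gcoef_0[of "1 - \<alpha>"] abs_gcoef_1_le_gcoef_0[of "1 - \<beta>"]
    by (simp add: add_mono mult_left_mono)
  also have "\<dots> = gab A B \<alpha> \<beta> h \<tau> 0"
    by (simp add: gab_def a_def b_def)
  finally show ?thesis .
qed

lemma abs_divide_le_one_of_abs_le:
  fixes c d p q :: real
  assumes "c > 0" "d \<ge> 0" "\<bar>p\<bar> \<le> q"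
  shows "\<bar>(c - p * d) / (c + q * d)\<bar> \<le> 1"
proof -
  have "\<bar>p * d\<bar> \<le> q * d"
    using assms by (simp add: abs_mult mult_right_mono)
  moreover have "c + q * d > 0"
    using assms by (simp add: add_pos_nonneg)
  ultimately show ?thesis
    using \<open>c > 0\<close> by (simp add: abs_le_iff divide_le_eq le_divide_eq)
qed

theorem lemma8:
  fixes A B \<alpha> \<beta> h \<tau> \<theta> :: real
  assumes "A > 0" "B > 0" "0 < \<alpha>" "\<alpha> < 1" "0 < \<beta>" "\<beta> < 1" "h > 0" "\<tau> > 0"
  defines "s \<equiv> (sin (\<theta> * h / 2))\<^sup>2"
  defines "Q \<equiv> (1 - 4/35 * s^3) + 4 * gab A B \<alpha> \<beta> h \<tau> 0 * s * (1 + s/3 + 8/45 * s\<^sup>2)"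
  defines "P \<equiv> (1 - 4/35 * s^3) - 4 * gab A B \<alpha> \<beta> h \<tau> 1 * s * (1 + s/3 + 8/45 * s\<^sup>2)"
  shows "\<bar>P / Q\<bar> \<le> 1"
proof -
  define c where "c = 1 - 4/35 * s^3"
  define d where "d = 4 * s * (1 + s/3 + 8/45 * s\<^sup>2)"
  have s: "0 \<le> s" "s \<le> 1"
    unfolding s_def by (simp_all add: abs_square_le_1)
  then have "s ^ 3 \<le> 1"
    by (simp add: power_le_one)
  then have "c > 0"
    by (simp add: c_def)
  moreover have "d \<ge> 0"
    using s by (simp add: d_def)
  moreover have "\<bar>gab A B \<alpha> \<beta> h \<tau> 1\<bar> \<le> gab A B \<alpha> \<beta> h \<tau> 0"
    using assms abs_gab_1_le_gab_0[of A B \<alpha> \<beta> h \<tau>] by simp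
  moreover have "P = c - gab A B \<alpha> \<beta> h \<tau> 1 * d" "Q = c + gab A B \<alpha> \<beta> h \<tau> 0 * d"
    by (simp_all add: P_def Q_def c_def d_def mult.assoc)
  ultimately show ?thesis
    by (simp only: abs_divide_le_one_of_abs_le)
qed

end
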